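(* Let $X_1,\dots,X_n$ ($n\ge 1$) and $Y$ be jointly distributed discrete random variables with $I(\mathbf X;Y)>0$, where $\mathbf X=(X_1,\dots,X_n)$, and let $\Pi$ be a partial information decomposition (as defined in the context) with $\Pi(\alpha)\ge 0$ for all $\alpha\in\mathcal A_n$. Then: (1) if $\bar r<1$ then $I_{\mathrm r}^{(0)}(\mathbf X;Y)>0$; (2) if $\bar r<0.5$ then $I_{\mathrm r}^{(0)}(\mathbf X;Y)/I(\mathbf X;Y)>0.5$; (3) if $\bar v<1$ then $I_{\mathrm v}^{(0)}(\mathbf X;Y)>0$; (4) if $\bar v<0.5$ then $I_{\mathrm v}^{(0)}(\mathbf X;Y)/I(\mathbf X;Y)>0.5$.
   Context: Notation: $[n]=\{1,\dots,n\}$. For $\mathbf a\subseteq[n]$, $X_{\mathbf a}=(X_i)_{i\in\mathbf a}$. Antichains: $\mathcal A_n$ is the set of all nonempty collections $\alpha$ of nonempty subsets of $[n]$ such that no element of $\alpha$ is a proper subset of another element of $\alpha$. Partial information decomposition (PID): any function $\Pi:\mathcal A_n\to\mathbb R$ satisfying, for every nonempty $\mathbf a\subseteq[n]$, $$I(X_{\mathbf a};Y)=\sum_{\alpha\in\mathcal A_n:\ \exists \mathbf b\in\alpha,\ \mathbf b\subseteq \mathbf a}\Pi(\alpha).$$ Degree of redundancy: $r(\alpha)=|\{i\in[n]: \{i\}\in\alpha\}|$. Degree of vulnerability: $v(\alpha)=|\{i\in[n]: i\in\mathbf b\text{ for all }\mathbf b\in\alpha\}|$. $I_{\mathrm r}^{(k)}(\mathbf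 X;Y)=\sum_{\alpha:\ r(\alpha)=k}\Pi(\alpha)$, $I_{\mathrm v}^{(k)}(\mathbf X;Y)=\sum_{\alpha:\ v(\alpha)=k}\Pi(\alpha)$. Average degrees: $\bar r=\sum_{k=0}^n k\,I_{\mathrm r}^{(k)}(\mathbf X;Y)/I(\mathbf X;Y)$ and $\bar v=\sum_{k=0}^n k\,I_{\mathrm v}^{(k)}(\mathbf X;Y)/I(\mathbf X;Y)$. *)

theory Defs
  imports "HOL-Probability.Probability"
begin

definition MI :: "'w measure \<Rightarrow> ('w \<Rightarrow> 'c) \<Rightarrow> ('w \<Rightarrow> 'b) \<Rightarrow> real" where
  "MI M X Y = prob_space.mutual_information M 2
      (count_space (X ` space M)) (count_space (Y ` space M)) X Y"

(* X_a = (X_i)_{i \<in> a}, represented as a function restricted to the index set a *)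
definition subvec :: "(nat \<Rightarrow> 'w \<Rightarrow> 'a) \<Rightarrow> nat set \<Rightarrow> 'w \<Rightarrow> (nat \<Rightarrow> 'a)" where
  "subvec X a = (\<lambda>\<omega>. restrict (\<lambda>i. X i \<omega>) a)"

definition antichains :: "nat \<Rightarrow> nat set set set" where
  "antichains n = {\<alpha>. \<alpha> \<noteq> {} \<and> (\<forall>b\<in>\<alpha>. b \<noteq> {} \<and> b \<subseteq> {1..n})
                     \<and> (\<forall>b\<in>\<alpha>. \<forall>c\<in>\<alpha>. \<not> b \<subset> c)}"

definition is_PID :: "'w measure \<Rightarrow> nat \<Rightarrow> (nat \<Rightarrow> 'w \<Rightarrow> 'a) \<Rightarrow> ('w \<Rightarrow> 'b)
                      \<Rightarrow> (nat set set \<Rightarrow> real) \<Rightarrow> bool" where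
  "is_PID M n X Y Pd \<longleftrightarrow>
     (\<forall>a. a \<noteq> {} \<and> a \<subseteq> {1..n} \<longrightarrow>
        MI M (subvec X a) Y = (\<Sum>\<alpha>\<in>{\<alpha>\<in>antichains n. \<exists>b\<in>\<alpha>. b \<subseteq> a}. Pd \<alpha>))"

definition red_deg :: "nat \<Rightarrow> nat set set \<Rightarrow> nat" where
  "red_deg n \<alpha> = card {i\<in>{1..n}. {i} \<in> \<alpha>}"

definition vul_deg :: "nat \<Rightarrow> nat set set \<Rightarrow> nat" where
  "vul_deg n \<alpha> = card {i\<in>{1..n}. \<forall>b\<in>\<alpha>. i \<in> b}"

definition I_r :: "nat \<Rightarrow> (nat set set \<Rightarrow> real) \<Rightarrow> nat \<Rightarrow> real" where
  "I_r n Pd k = (\<Sum>\<alpha>\<in>{\<alpha>\<in>antichains n. red_deg n \<alpha> = k}. Pd \<alpha>)"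

definition I_v :: "nat \<Rightarrow> (nat set set \<Rightarrow> real) \<Rightarrow> nat \<Rightarrow> real" where
  "I_v n Pd k = (\<Sum>\<alpha>\<in>{\<alpha>\<in>antichains n. vul_deg n \<alpha> = k}. Pd \<alpha>)"

(* average degrees; Itot stands for I(X;Y) *)
definition avg_red :: "nat \<Rightarrow> (nat set set \<Rightarrow> real) \<Rightarrow> real \<Rightarrow> real" where
  "avg_red n Pd Itot = (\<Sum>k=0..n. real k * I_r n Pd k) / Itot"

definition avg_vul :: "nat \<Rightarrow> (nat set set \<Rightarrow> real) \<Rightarrow> real \<Rightarrow> real" where
  "avg_vul n Pd Itot = (\<Sum>k=0..n. real k * I_v n Pd k) / Itot"

end

theory Submission
  imports Defs
begin

(* Since every antichain is counted by the PID identity for a = [n], I(X;Y) is the sum of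
   all atoms \<Pi>(\<alpha>), and the levels {\<alpha>. deg \<alpha> = k} partition \<A>_n. With \<Pi> \<ge> 0 and k \<ge> 1
   on every level but the zeroth, \<Sum>_k k I^(k) \<ge> \<Sum>_{k\<ge>1} I^(k) = I(X;Y) - I^(0), i.e. the
   average degree is at least 1 - I^(0)/I(X;Y). This holds for redundancy and vulnerability
   alike. *)

lemma sum_level_sets_weighted:
  fixes d :: "'x \<Rightarrow> nat" and P :: "'x \<Rightarrow> real"
  assumes "finite A" and "\<forall>a\<in>A. d a \<le> n"
  shows "(\<Sum>k=0..n. real k * (\<Sum>a\<in>{a\<in>A. d a = k}. P a)) = (\<Sum>a\<in>A. real (d a) * P a)"
proof -
  have "(\<Sum>k=0..n. real k * (\<Sum>a\<in>{a\<in>A. d a = k}. P a))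
      = (\<Sum>k=0..n. \<Sum>a\<in>{a\<in>A. d a = k}. real (d a) * P a)"
    by (simp add: sum_distrib_left)
  also have "\<dots> = (\<Sum>a\<in>A. real (d a) * P a)"
    by (rule sum.group) (use assms in auto)
  finally show ?thesis .
qed

lemma sum_le_level0_plus_weighted:
  fixes d :: "'x \<Rightarrow> nat" and P :: "'x \<Rightarrow> real"
  assumes "finite A" and "\<forall>a\<in>A. P a \<ge> 0"
  shows "(\<Sum>a\<in>A. P a) \<le> (\<Sum>a\<in>{a\<in>A. d a = 0}. P a) + (\<Sum>a\<in>A. real (d a) * P a)"
proof -
  have "(\<Sum>a\<in>A. P a) = (\<Sum>a\<in>{a\<in>A. d a = 0}. P a) + (\<Sum>a\<in>{a\<in>A. d a \<noteq> 0}. P a)"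
    using assms(1) by (subst sum.union_disjoint[symmetric]) (auto intro: sum.cong)
  moreover have "(\<Sum>a\<in>{a\<in>A. d a \<noteq> 0}. P a) \<le> (\<Sum>a\<in>{a\<in>A. d a \<noteq> 0}. real (d a) * P a)"
    using assms(2) by (intro sum_mono) (fastforce simp: mult_le_cancel_right1)
  moreover have "\<dots> \<le> (\<Sum>a\<in>A. real (d a) * P a)"
    using assms by (intro sum_mono2) auto
  ultimately show ?thesis by linarith
qed

lemma degree_moment_ge_sum_minus_level0:
  fixes d :: "'x \<Rightarrow> nat" and P :: "'x \<Rightarrow> real"
  assumes "finite A" and "\<forall>a\<in>A. d a \<le> n" and "\<forall>a\<in>A. P a \<ge> 0"
  shows "(\<Sum>k=0..n. real k * (\<Sum>a\<in>{a\<in>A. d a = k}. P a))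
           \<ge> (\<Sum>a\<in>A. P a) - (\<Sum>a\<in>{a\<in>A. d a = 0}. P a)"
  using sum_le_level0_plus_weighted[OF assms(1,3), of d] sum_level_sets_weighted[OF assms(1,2), of P]
  by linarith

lemma level0_share_from_mean:
  fixes T S J :: real
  assumes "T > 0" and "S \<ge> T - J"
  shows "(S / T < 1 \<longrightarrow> J > 0) \<and> (S / T < 1/2 \<longrightarrow> J / T > 1/2)"
  using assms by (simp add: divide_less_eq less_divide_eq)

lemma finite_antichains: "finite (antichains n)"
proof (rule finite_subset)
  show "antichains n \<subseteq> Pow (Pow {1..n})" unfolding antichains_def by auto
qed simp

lemma red_deg_le: "red_deg n \<alpha> \<le> n"
  unfolding red_deg_def by (rule order_trans[OF card_mono[of "{1..n}"]]) auto

lemma vul_deg_le: "vul_deg n \<alpha> \<le> n"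
  unfolding vul_deg_def by (rule order_trans[OF card_mono[of "{1..n}"]]) auto

lemma is_PID_total:
  assumes "is_PID M n X Y Pd" and "n \<ge> 1"
  shows "MI M (subvec X {1..n}) Y = (\<Sum>\<alpha>\<in>antichains n. Pd \<alpha>)"
proof -
  have "{\<alpha>\<in>antichains n. \<exists>b\<in>\<alpha>. b \<subseteq> {1..n}} = antichains n"
    unfolding antichains_def by auto
  then show ?thesis using assms unfolding is_PID_def by force
qed

theorem corollary3:
  fixes M :: "'w measure" and n :: nat and X :: "nat \<Rightarrow> 'w \<Rightarrow> 'a" and Y :: "'w \<Rightarrow> 'b"
    and Pd :: "nat set set \<Rightarrow> real"
  assumes "prob_space M"
    and "n \<ge> 1"
    and "\<forall>i\<in>{1..n}. X i \<in> measurable M (count_space UNIV) \<and> countable (X i ` space M)"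
    and "Y \<in> measurable M (count_space UNIV)" and "countable (Y ` space M)"
    and "MI M (subvec X {1..n}) Y > 0"
    and "is_PID M n X Y Pd"
    and "\<forall>\<alpha>\<in>antichains n. Pd \<alpha> \<ge> 0"
  shows "(avg_red n Pd (MI M (subvec X {1..n}) Y) < 1 \<longrightarrow> I_r n Pd 0 > 0)
       \<and> (avg_red n Pd (MI M (subvec X {1..n}) Y) < 1/2 \<longrightarrow>
            I_r n Pd 0 / MI M (subvec X {1..n}) Y > 1/2)
       \<and> (avg_vul n Pd (MI M (subvec X {1..n}) Y) < 1 \<longrightarrow> I_v n Pd 0 > 0)
       \<and> (avg_vul n Pd (MI M (subvec X {1..n}) Y) < 1/2 \<longrightarrow>
            I_v n Pd 0 / MI M (subvec X {1..n}) Y > 1/2)"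
proof -
  define T where "T = MI M (subvec X {1..n}) Y"
  have T_sum: "T = (\<Sum>\<alpha>\<in>antichains n. Pd \<alpha>)"
    unfolding T_def using is_PID_total assms(2,7) by blast
  have "(\<Sum>k=0..n. real k * I_r n Pd k) \<ge> T - I_r n Pd 0"
    unfolding I_r_def T_sum
    by (rule degree_moment_ge_sum_minus_level0) (use finite_antichains red_deg_le assms(8) in auto)
  moreover have "(\<Sum>k=0..n. real k * I_v n Pd k) \<ge> T - I_v n Pd 0"
    unfolding I_v_def T_sum
    by (rule degree_moment_ge_sum_minus_level0) (use finite_antichains vul_deg_le assms(8) in auto)
  ultimately show ?thesis
    using level0_share_from_mean[of T] assms(6)
    unfolding avg_red_def avg_vul_def T_def by blast
qed

end
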